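(* Let $S\subset\mathbb{R}^p$ be a compact set with $\mathrm{cl}(\mathrm{int}(S))=S$ and let $\mu_S$ be the uniform probability measure on $S$. Let $\mathbf{x}\notin S$ and let $\delta$ be such that $\mathrm{dist}(\mathbf{x},S)\ge\delta$. Then for every positive integer $d$, \[s(d)\,\Lambda_{\mu_S,d}(\mathbf{x})\le 2^{3-\frac{\delta d}{\delta+\mathrm{diam}(S)}}\,d^p\left(\frac{e}{p}\right)^p\exp\left(\frac{p^2}{d}\right).\]
   Context: $\mu_S=\lambda_S/\lambda(S)$ where $\lambda_S$ is the restriction of Lebesgue measure to $S$; $\mathrm{diam}(S)$ is the diameter of $S$; $s(d)=\binom{p+d}{d}$. For a finite Borel measure $\nu$ with finite moments, $\Lambda_{\nu,d}(\xi)=\min\{\int P^2\,d\nu: P\in\mathbb{R}[X]_d,\ P(\xi)=1\}$, where $\mathbb{R}[X]_d$ is the space of real polynomials in $p$ variables of total degree at most $d$. *)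

theory Defs
  imports "HOL-Analysis.Analysis"
begin

definition multi_idx :: "nat \<Rightarrow> ('n::finite \<Rightarrow> nat) set" where
  "multi_idx d = {\<alpha>. (\<Sum>i\<in>UNIV. \<alpha> i) \<le> d}"

definition monomial_fn :: "('n::finite \<Rightarrow> nat) \<Rightarrow> real^'n \<Rightarrow> real" where
  "monomial_fn \<alpha> x = (\<Prod>i\<in>UNIV. (x $ i) ^ (\<alpha> i))"

definition polys_deg :: "nat \<Rightarrow> (real^'n::finite \<Rightarrow> real) set" where
  "polys_deg d = {P. \<exists>c. P = (\<lambda>x. \<Sum>\<alpha>\<in>multi_idx d. c \<alpha> * monomial_fn \<alpha> x)}"

definition christoffel :: "(real^'n::finite) measure \<Rightarrow> nat \<Rightarrow> real^'n \<Rightarrow> real" where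
  "christoffel \<nu> d \<xi> = Inf {integral\<^sup>L \<nu> (\<lambda>x. (P x)^2) | P. P \<in> polys_deg d \<and> P \<xi> = 1}"

definition unif_meas :: "(real^'n::finite) set \<Rightarrow> (real^'n) measure" where
  "unif_meas S = uniform_measure lborel S"

definition sdim :: "nat \<Rightarrow> nat \<Rightarrow> nat" where
  "sdim p d = (p + d) choose d"

end

theory Submission
  imports Defs "HOL-Probability.Probability"
begin

text \<open>Let \<open>D = dist(x, S)\<close> and \<open>R = D + diam S\<close>, so that \<open>D \<le> |z - x| \<le> R\<close> on \<open>S\<close>.
  The quadratic \<open>f(z) = (R\<^sup>2 + D\<^sup>2 - 2|z - x|\<^sup>2) / (R\<^sup>2 - D\<^sup>2)\<close> maps \<open>S\<close> into \<open>[-1, 1]\<close>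
  and \<open>x\<close> to \<open>(l + 1/l)/2\<close> with \<open>l = (R + D)/(R - D)\<close>. For the Chebyshev polynomial \<open>T\<^sub>k\<close>,
  \<open>k = \<lfloor>d/2\<rfloor>\<close>, the polynomial \<open>T\<^sub>k(f) / T\<^sub>k(f(x))\<close> has degree at most \<open>d\<close>, equals 1 at \<open>x\<close>
  and is bounded by \<open>2 / l\<^sup>k\<close> on \<open>S\<close>; its mean square bounds the Christoffel function by
  \<open>4 l\<^sup>-\<^sup>2\<^sup>k \<le> 2\<^bsup>3 - d D/R\<^esup>\<close> because \<open>l \<ge> e\<^bsup>D/R\<^esup>\<close>. Finally
  \<open>s(d) \<le> (p + d)\<^sup>p / p! \<le> d\<^sup>p (e/p)\<^sup>p e\<^bsup>p\<^sup>2/d\<^esup>\<close>.\<close>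

lemma finite_multi_idx: "finite (multi_idx d :: ('n::finite \<Rightarrow> nat) set)"
proof -
  have "multi_idx d \<subseteq> PiE (UNIV::'n set) (\<lambda>_. {..d})"
  proof
    fix \<alpha> :: "'n \<Rightarrow> nat" assume \<alpha>: "\<alpha> \<in> multi_idx d"
    have "\<alpha> i \<le> d" for i
    proof -
      have "\<alpha> i \<le> (\<Sum>j\<in>UNIV. \<alpha> j)" by (rule member_le_sum) auto
      then show ?thesis using \<alpha> by (simp add: multi_idx_def)
    qed
    then show "\<alpha> \<in> PiE UNIV (\<lambda>_. {..d})" by (auto simp: PiE_def extensional_def)
  qed
  then show ?thesis by (rule finite_subset) (simp add: finite_PiE)
qed

lemma sum_monomials_in_polys_deg:
  fixes g :: "'j \<Rightarrow> ('n::finite \<Rightarrow> nat)"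
  assumes "finite J" "\<And>j. j \<in> J \<Longrightarrow> g j \<in> multi_idx d"
  shows "(\<lambda>x. \<Sum>j\<in>J. c j * monomial_fn (g j) x) \<in> polys_deg d"
proof -
  define e where "e \<alpha> = (\<Sum>j\<in>{j\<in>J. g j = \<alpha>}. c j)" for \<alpha>
  have "(\<Sum>\<alpha>\<in>multi_idx d. e \<alpha> * monomial_fn \<alpha> x) = (\<Sum>j\<in>J. c j * monomial_fn (g j) x)" for x
  proof -
    have "(\<Sum>\<alpha>\<in>multi_idx d. e \<alpha> * monomial_fn \<alpha> x)
        = (\<Sum>\<alpha>\<in>multi_idx d. \<Sum>j\<in>{j\<in>J. g j = \<alpha>}. c j * monomial_fn (g j) x)"
      by (auto simp: e_def sum_distrib_right intro!: sum.cong)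
    also have "\<dots> = (\<Sum>j\<in>J. c j * monomial_fn (g j) x)"
      by (rule sum.group) (use assms finite_multi_idx in auto)
    finally show ?thesis .
  qed
  then show ?thesis unfolding polys_deg_def by (intro CollectI exI[of _ e]) auto
qed

lemma polys_deg_mono:
  assumes "P \<in> polys_deg m" "m \<le> n" shows "P \<in> polys_deg n"
proof -
  obtain c where c: "P = (\<lambda>x. \<Sum>\<alpha>\<in>multi_idx m. c \<alpha> * monomial_fn \<alpha> x)"
    using assms unfolding polys_deg_def by auto
  show ?thesis unfolding c
    by (rule sum_monomials_in_polys_deg[where g=id, simplified])
      (use assms finite_multi_idx in \<open>auto simp: multi_idx_def\<close>)
qed

lemma polys_deg_add:
  assumes "P \<in> polys_deg n" "Q \<in> polys_deg n" shows "(\<lambda>x. P x + Q x) \<in> polys_deg n"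
proof -
  obtain c c' where
    "P = (\<lambda>x. \<Sum>\<alpha>\<in>multi_idx n. c \<alpha> * monomial_fn \<alpha> x)"
    "Q = (\<lambda>x. \<Sum>\<alpha>\<in>multi_idx n. c' \<alpha> * monomial_fn \<alpha> x)"
    using assms unfolding polys_deg_def by auto
  then show ?thesis unfolding polys_deg_def
    by (intro CollectI exI[of _ "\<lambda>\<alpha>. c \<alpha> + c' \<alpha>"]) (auto simp: sum.distrib algebra_simps)
qed

lemma polys_deg_scale:
  assumes "P \<in> polys_deg n" shows "(\<lambda>x. a * P x) \<in> polys_deg n"
proof -
  obtain c where "P = (\<lambda>x. \<Sum>\<alpha>\<in>multi_idx n. c \<alpha> * monomial_fn \<alpha> x)"
    using assms unfolding polys_deg_def by auto
  then show ?thesis unfolding polys_deg_def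
    by (intro CollectI exI[of _ "\<lambda>\<alpha>. a * c \<alpha>"]) (auto simp: sum_distrib_left algebra_simps)
qed

lemma monomial_fn_add: "monomial_fn (\<lambda>i. \<alpha> i + \<beta> i) x = monomial_fn \<alpha> x * monomial_fn \<beta> x"
  by (simp add: monomial_fn_def power_add prod.distrib)

lemma polys_deg_mult:
  assumes "P \<in> polys_deg m" "Q \<in> polys_deg n" shows "(\<lambda>x. P x * Q x) \<in> polys_deg (m + n)"
proof -
  obtain c c' where c: "P = (\<lambda>x. \<Sum>\<alpha>\<in>multi_idx m. c \<alpha> * monomial_fn \<alpha> x)"
    and c': "Q = (\<lambda>x. \<Sum>\<alpha>\<in>multi_idx n. c' \<alpha> * monomial_fn \<alpha> x)"
    using assms unfolding polys_deg_def by auto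
  have "P x * Q x = (\<Sum>ab\<in>multi_idx m \<times> multi_idx n.
      (c (fst ab) * c' (snd ab)) * monomial_fn (\<lambda>i. fst ab i + snd ab i) x)" for x
    unfolding c c' sum_product sum.cartesian_product monomial_fn_add
    by (auto intro!: sum.cong simp: algebra_simps)
  moreover have "(\<lambda>x. \<Sum>ab\<in>multi_idx m \<times> multi_idx n.
      (c (fst ab) * c' (snd ab)) * monomial_fn (\<lambda>i. fst ab i + snd ab i) x) \<in> polys_deg (m + n)"
    by (rule sum_monomials_in_polys_deg)
      (auto simp: finite_multi_idx[unfolded multi_idx_def] multi_idx_def sum.distrib)
  ultimately show ?thesis by simp
qed

lemma polys_deg_const: "(\<lambda>x::real^'n::finite. a) \<in> polys_deg n"
proof -
  have "(\<lambda>x. \<Sum>j\<in>{\<lambda>_::'n. 0::nat}. a * monomial_fn j x) \<in> polys_deg n"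
    by (rule sum_monomials_in_polys_deg) (auto simp: multi_idx_def)
  then show ?thesis by (simp add: monomial_fn_def)
qed

lemma polys_deg_coord: "(\<lambda>x::real^'n::finite. x $ i) \<in> polys_deg 1"
proof -
  have "(\<lambda>x. \<Sum>j\<in>{(\<lambda>k. if k = i then 1 else 0)::'n\<Rightarrow>nat}. 1 * monomial_fn j x) \<in> polys_deg 1"
    by (rule sum_monomials_in_polys_deg) (auto simp: multi_idx_def)
  moreover have "monomial_fn (\<lambda>k. if k = i then 1 else 0) x = x $ i" for x :: "real^'n"
    unfolding monomial_fn_def by (simp add: if_distrib prod.If_cases)
  ultimately show ?thesis by simp
qed

lemma polys_deg_sum:
  assumes "finite I" "\<And>i. i \<in> I \<Longrightarrow> P i \<in> polys_deg n"
  shows "(\<lambda>x. \<Sum>i\<in>I. P i x) \<in> polys_deg n"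
  using assms
proof (induction I rule: finite_induct)
  case empty then show ?case using polys_deg_const[of 0 n] by simp
next
  case (insert a F) then show ?case by (simp add: polys_deg_add)
qed

lemma polys_deg_norm_diff_sq: "(\<lambda>y::real^'n::finite. (norm (y - x))\<^sup>2) \<in> polys_deg 2"
proof -
  have norm_sq: "(norm (y - x))\<^sup>2 = (\<Sum>i\<in>UNIV. (y$i - x$i) * (y$i - x$i))" for y
    by (simp add: power2_norm_eq_inner inner_vec_def)
  have "(\<lambda>y::real^'n. y$i - x$i) \<in> polys_deg 1" for i
    using polys_deg_add[OF polys_deg_coord[of i] polys_deg_const[of "- x$i" 1]] by simp
  then have "(\<lambda>y::real^'n. (y$i - x$i) * (y$i - x$i)) \<in> polys_deg 2" for i
    using polys_deg_mult[of _ 1 _ 1] by (metis one_add_one)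
  then show ?thesis unfolding norm_sq by (intro polys_deg_sum) auto
qed

fun cheb :: "nat \<Rightarrow> real \<Rightarrow> real" where
  "cheb 0 s = 1"
| "cheb (Suc 0) s = s"
| "cheb (Suc (Suc k)) s = 2 * s * cheb (Suc k) s - cheb k s"

lemma polys_deg_cheb_comp:
  assumes "f \<in> polys_deg m" shows "(\<lambda>y. cheb k (f y)) \<in> polys_deg (k * m)"
proof (induction k rule: induct_nat_012)
  case 0 then show ?case by (simp add: polys_deg_const)
next
  case 1 then show ?case using assms by simp
next
  case (ge2 k)
  have "(\<lambda>y. (2 * f y) * cheb (Suc k) (f y)) \<in> polys_deg (m + Suc k * m)"
    by (rule polys_deg_mult[OF polys_deg_scale[OF assms] ge2(2)])
  then have "(\<lambda>y. (2 * f y) * cheb (Suc k) (f y)) \<in> polys_deg (Suc (Suc k) * m)"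
    by simp
  moreover have "(\<lambda>y. -1 * cheb k (f y)) \<in> polys_deg (Suc (Suc k) * m)"
    by (rule polys_deg_scale, rule polys_deg_mono[OF ge2(1)]) simp
  ultimately show ?case using polys_deg_add by fastforce
qed

lemma cheb_cos: "cheb k (cos t) = cos (real k * t)"
proof (induction k rule: induct_nat_012)
  case (ge2 k)
  have "cos (real (Suc (Suc k)) * t) + cos (real k * t) = 2 * cos t * cos (real (Suc k) * t)"
    using cos_add[of "real (Suc k) * t" t] cos_diff[of "real (Suc k) * t" t]
    by (simp add: algebra_simps)
  then show ?case using ge2 by simp
qed auto

lemma abs_cheb_le_one: "\<bar>s\<bar> \<le> 1 \<Longrightarrow> \<bar>cheb k s\<bar> \<le> 1"
  using cheb_cos[of k "arccos s"] by (simp add: cos_arccos_abs)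

lemma cheb_half_sum_reciprocals:
  assumes "l * m = 1" shows "cheb k ((l + m) / 2) = (l ^ k + m ^ k) / 2"
proof (induction k rule: induct_nat_012)
  case (ge2 k)
  have "(l + m) * (l ^ Suc k + m ^ Suc k) = l ^ Suc (Suc k) + m ^ Suc (Suc k) + (l * m) * (l ^ k + m ^ k)"
    by (simp add: algebra_simps)
  then show ?case using ge2 assms by (simp add: field_simps)
qed auto

lemma christoffel_unif_meas_le:
  fixes S :: "(real^'n::finite) set"
  assumes "S \<in> sets lborel" "emeasure lborel S \<noteq> 0" "emeasure lborel S \<noteq> \<infinity>"
    and "P \<in> polys_deg d" "P \<xi> = 1" "\<And>z. z \<in> S \<Longrightarrow> (P z)\<^sup>2 \<le> B"
  shows "christoffel (unif_meas S) d \<xi> \<le> B"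
proof -
  interpret prob_space "unif_meas S"
    unfolding unif_meas_def using assms(2,3) by (rule prob_space_uniform_measure)
  have "S \<noteq> {}" using assms(2) by auto
  then have "0 \<le> B" using assms(6) by (meson order_trans zero_le_power2 ex_in_conv)
  have "integral\<^sup>L (unif_meas S) (\<lambda>z. (P z)\<^sup>2) \<le> B"
  proof (cases "integrable (unif_meas S) (\<lambda>z. (P z)\<^sup>2)")
    case True
    moreover have "AE z in unif_meas S. (P z)\<^sup>2 \<le> B"
      unfolding unif_meas_def by (rule AE_uniform_measureI[OF assms(1)]) (auto intro: assms(6))
    ultimately show ?thesis by (rule integral_le_const)
  next
    case False then show ?thesis using \<open>0 \<le> B\<close> by (simp add: not_integrable_integral_eq)
  qed
  moreover have "christoffel (unif_meas S) d \<xi> \<le> integral\<^sup>L (unif_meas S) (\<lambda>z. (P z)\<^sup>2)"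
    unfolding christoffel_def
    by (rule cInf_lower) (use assms(4,5) in \<open>auto intro!: bdd_belowI[of _ 0]\<close>)
  ultimately show ?thesis by simp
qed

lemma annulus_peak_polynomial:
  fixes S :: "(real^'n::finite) set"
  assumes "0 < D" "D < R" "\<And>z. z \<in> S \<Longrightarrow> D \<le> dist z x \<and> dist z x \<le> R"
  obtains P where "P \<in> polys_deg (2 * k)" "P x = 1"
    "\<And>z. z \<in> S \<Longrightarrow> (P z)\<^sup>2 \<le> 4 * ((R - D) / (R + D)) ^ (2 * k)"
proof -
  define l where "l = (R + D) / (R - D)"
  define m where "m = (R - D) / (R + D)"
  have lm: "l * m = 1" "0 < l" "0 < m" using assms by (auto simp: l_def m_def)
  have RD2: "0 < R\<^sup>2 - D\<^sup>2" using assms by (simp add: power_strict_mono)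
  define f where "f z = (R\<^sup>2 + D\<^sup>2 - 2 * (norm (z - x))\<^sup>2) / (R\<^sup>2 - D\<^sup>2)" for z :: "real^'n"
  have "(\<lambda>z. (R\<^sup>2 + D\<^sup>2) / (R\<^sup>2 - D\<^sup>2) + (- 2 / (R\<^sup>2 - D\<^sup>2)) * (norm (z - x))\<^sup>2) \<in> polys_deg 2"
    by (intro polys_deg_add polys_deg_const polys_deg_scale polys_deg_norm_diff_sq)
  moreover have "f = (\<lambda>z. (R\<^sup>2 + D\<^sup>2) / (R\<^sup>2 - D\<^sup>2) + (- 2 / (R\<^sup>2 - D\<^sup>2)) * (norm (z - x))\<^sup>2)"
    unfolding f_def by (auto simp: fun_eq_iff diff_divide_distrib)
  ultimately have f_poly: "f \<in> polys_deg 2" by simp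
  have f_x: "f x = (l + m) / 2"
    using assms RD2 unfolding f_def l_def m_def by (simp add: field_simps power2_eq_square)
  have f_S: "\<bar>f z\<bar> \<le> 1" if "z \<in> S" for z
  proof -
    have "D\<^sup>2 \<le> (norm (z - x))\<^sup>2" "(norm (z - x))\<^sup>2 \<le> R\<^sup>2"
      using assms(1) assms(3)[OF that] by (auto simp: dist_norm intro: power_mono)
    then show ?thesis using RD2 unfolding f_def by (auto simp: abs_le_iff field_simps)
  qed
  define c where "c = cheb k (f x)"
  have c: "c = (l ^ k + m ^ k) / 2"
    unfolding c_def f_x by (rule cheb_half_sum_reciprocals[OF lm(1)])
  moreover have "0 < l ^ k + m ^ k" using lm by (intro add_pos_pos) simp_all
  ultimately have "0 < c" by simp
  define P where "P z = cheb k (f z) / c" for z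
  show thesis
  proof
    show "P \<in> polys_deg (2 * k)"
      using polys_deg_scale[OF polys_deg_cheb_comp[OF f_poly], of "1 / c" k]
      by (simp add: P_def[abs_def] mult.commute)
    show "P x = 1" using \<open>0 < c\<close> by (simp add: P_def c_def)
    fix z assume "z \<in> S"
    have "\<bar>P z\<bar> \<le> 1 / c"
      using abs_cheb_le_one[OF f_S[OF \<open>z \<in> S\<close>], of k] \<open>0 < c\<close>
      by (simp add: P_def divide_right_mono)
    also have "\<dots> \<le> 2 / l ^ k"
      using lm by (simp add: c frac_le)
    also have "\<dots> = 2 * m ^ k"
      using lm by (simp add: field_simps flip: power_mult_distrib)
    finally have "\<bar>P z\<bar>\<^sup>2 \<le> (2 * m ^ k)\<^sup>2"
      by (rule power_mono) simp
    then show "(P z)\<^sup>2 \<le> 4 * ((R - D) / (R + D)) ^ (2 * k)"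
      by (simp add: m_def power_mult_distrib power_mult[symmetric] mult.commute)
  qed
qed

lemma two_powr_ratio_le_annulus_ratio:
  fixes D R :: real
  assumes "0 < D" "D < R"
  shows "2 powr (D / R) \<le> (R + D) / (R - D)"
proof -
  have "2 powr (D / R) = exp (D / R * ln 2)"
    by (simp add: powr_def mult.commute)
  also have "\<dots> \<le> exp (D / R)"
    using mult_left_le[of "ln 2" "D / R"] ln_2_less_1 assms by simp
  also have "\<dots> \<le> 1 / (1 - D / R)"
    using exp_ge_add_one_self[of "- (D / R)"] assms by (simp add: exp_minus field_simps)
  also have "\<dots> = R / (R - D)"
    using assms by (simp add: field_simps)
  also have "\<dots> \<le> (R + D) / (R - D)"
    using assms by (simp add: divide_right_mono)
  finally show ?thesis .
qed

lemma annulus_bound_le_powr: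
  fixes D R :: real
  assumes "0 < D" "D < R"
  shows "4 * ((R - D) / (R + D)) ^ (2 * (d div 2)) \<le> 2 powr (3 - D / R * real d)"
proof -
  have "(R - D) / (R + D) \<le> 2 powr (- (D / R))"
    using two_powr_ratio_le_annulus_ratio[OF assms] assms
    by (simp add: powr_minus divide_simps mult.commute)
  then have "((R - D) / (R + D)) ^ (2 * (d div 2)) \<le> (2 powr (- (D / R))) ^ (2 * (d div 2))"
    using assms by (intro power_mono) auto
  also have "\<dots> = 2 powr (- (D / R) * real (2 * (d div 2)))"
    by (simp add: powr_power mult.commute)
  also have "\<dots> \<le> 2 powr (1 - D / R * real d)"
  proof (rule powr_mono)
    have "real d - 1 \<le> real (2 * (d div 2))" by linarith
    then have "D / R * (real d - 1) \<le> D / R * real (2 * (d div 2))"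
      using assms by (intro mult_left_mono) auto
    moreover have "D / R \<le> 1" using assms by simp
    ultimately show "- (D / R) * real (2 * (d div 2)) \<le> 1 - D / R * real d"
      by (simp add: algebra_simps)
  qed simp
  finally have "4 * ((R - D) / (R + D)) ^ (2 * (d div 2)) \<le> 2 powr 2 * 2 powr (1 - D / R * real d)"
    by simp
  also have "\<dots> = 2 powr (3 - D / R * real d)"
    by (subst powr_add[symmetric]) (simp add: algebra_simps)
  finally show ?thesis .
qed

lemma power_div_fact_le_exp:
  assumes "0 \<le> (x::real)" shows "x ^ n / fact n \<le> exp x"
proof -
  have "(\<Sum>k\<in>{n}. x ^ k / fact k) \<le> exp x"
    using assms summable_exp_generic[of x] sum_le_suminf[of "\<lambda>k. inverse (fact k) * x ^ k" "{n}"]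
    by (auto simp: exp_def divide_inverse ac_simps)
  then show ?thesis by simp
qed

lemma sdim_le:
  assumes "1 \<le> p" "0 < d"
  shows "real (sdim p d) \<le> real d ^ p * (exp 1 / real p) ^ p * exp (real p ^ 2 / real d)"
proof -
  have "fact p * fact d * ((p + d) choose p) = (fact (p + d) :: nat)"
    using binomial_fact_lemma[of p "p + d"] by simp
  then have "fact (p + d) div fact d = fact p * ((p + d) choose p)"
    by (metis div_mult_self1_is_m fact_gt_zero mult.commute mult.left_commute)
  moreover have "fact (p + d) div fact d \<le> (p + d) ^ p"
    using fact_div_fact_le_pow[of p "p + d"] by simp
  ultimately have "fact p * real ((p + d) choose p) \<le> (real p + real d) ^ p"
    by (metis of_nat_add of_nat_fact of_nat_le_iff of_nat_mult of_nat_power)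
  then have binom_le: "real ((p + d) choose p) \<le> (real p + real d) ^ p * (1 / fact p)"
    by (simp add: field_simps)
  have "(real p + real d) ^ p = real d ^ p * (1 + real p / real d) ^ p"
    using assms by (simp add: field_simps flip: power_mult_distrib)
  also have "\<dots> \<le> real d ^ p * exp (real p / real d) ^ p"
    by (intro mult_left_mono power_mono) (auto intro: exp_ge_add_one_self)
  also have "exp (real p / real d) ^ p = exp (real p ^ 2 / real d)"
    by (simp add: exp_of_nat_mult[symmetric] power2_eq_square)
  finally have power_le: "(real p + real d) ^ p \<le> real d ^ p * exp (real p ^ 2 / real d)" .
  have "1 / fact p \<le> exp (real p) / real p ^ p"
    using power_div_fact_le_exp[of "real p" p] assms by (simp add: field_simps)
  also have "\<dots> = (exp 1 / real p) ^ p"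
    by (simp add: power_divide exp_of_nat_mult[symmetric])
  finally have inv_fact_le: "1 / fact p \<le> (exp 1 / real p) ^ p" .
  have "real (sdim p d) = real ((p + d) choose p)"
    by (simp add: sdim_def binomial_symmetric[of d "p + d"])
  also have "\<dots> \<le> (real d ^ p * exp (real p ^ 2 / real d)) * (exp 1 / real p) ^ p"
    using binom_le mult_mono[OF power_le inv_fact_le] by (force intro: order_trans)
  finally show ?thesis by (simp add: ac_simps)
qed

lemma dist_le_infdist_add_diameter:
  fixes S :: "'a::heine_borel set"
  assumes "compact S" "z \<in> S"
  shows "dist x z \<le> infdist x S + diameter S"
proof -
  obtain z0 where "z0 \<in> S" "infdist x S = dist x z0"
    using infdist_attains_inf[OF compact_imp_closed[OF assms(1)]] assms(2) by blast
  moreover have "dist z0 z \<le> diameter S"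
    using assms \<open>z0 \<in> S\<close> by (intro diameter_bounded_bound compact_imp_bounded)
  ultimately show ?thesis using dist_triangle[of x z z0] by simp
qed

lemma emeasure_lborel_nonzero_if_ball_subset:
  fixes S :: "'a::euclidean_space set"
  assumes "0 < e" "ball y e \<subseteq> S" "S \<in> sets lborel"
  shows "emeasure lborel S \<noteq> 0"
proof -
  have "emeasure lborel (ball y e) \<noteq> 0"
    using content_ball_pos[OF assms(1), of y] by (metis measure_def enn2real_0 less_irrefl)
  moreover have "emeasure lborel (ball y e) \<le> emeasure lborel S"
    using assms by (intro emeasure_mono) auto
  ultimately show ?thesis by (metis le_zero_eq)
qed

theorem lemma6p6:
  fixes S :: "(real^'n) set" and x :: "real^'n" and \<delta> :: real and d :: nat
  assumes "compact S"
    and "closure (interior S) = S"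
    and "x \<notin> S"
    and "0 < \<delta>"
    and "infdist x S \<ge> \<delta>"
    and "0 < d"
  shows "real (sdim CARD('n) d) * christoffel (unif_meas S) d x
         \<le> 2 powr (3 - \<delta> * real d / (\<delta> + diameter S)) * real d ^ CARD('n)
            * (exp 1 / real CARD('n)) ^ CARD('n) * exp (real CARD('n) ^ 2 / real d)"
proof -
  have "S \<noteq> {}" using assms(4,5) by (auto simp: infdist_def)
  then obtain y e where e: "0 < e" "ball y e \<subseteq> S"
    using assms(2) by (metis closure_empty equals0I mem_interior)
  define D where "D = infdist x S"
  define R where "R = D + diameter S"
  have D: "\<delta> \<le> D" "0 < D" using assms(4,5) by (auto simp: D_def)
  have "2 * e \<le> diameter S"
    using diameter_subset[OF e(2) compact_imp_bounded[OF assms(1)]] e(1) by simp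
  then have "D < R" using e(1) by (simp add: R_def)
  have "D \<le> dist z x \<and> dist z x \<le> R" if "z \<in> S" for z
    using infdist_le[OF that] dist_le_infdist_add_diameter[OF assms(1) that, of x]
    by (simp add: D_def R_def dist_commute)
  then obtain P where P: "P \<in> polys_deg (2 * (d div 2))" "P x = 1"
    "\<And>z. z \<in> S \<Longrightarrow> (P z)\<^sup>2 \<le> 4 * ((R - D) / (R + D)) ^ (2 * (d div 2))"
    using annulus_peak_polynomial[OF \<open>0 < D\<close> \<open>D < R\<close>] by blast
  have S_sets: "S \<in> sets lborel" using compact_imp_closed[OF assms(1)] by simp
  have "christoffel (unif_meas S) d x \<le> 4 * ((R - D) / (R + D)) ^ (2 * (d div 2))"
    by (rule christoffel_unif_meas_le[OF S_sets emeasure_lborel_nonzero_if_ball_subset[OF e S_sets]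
          _ polys_deg_mono[OF P(1)] P(2,3)])
      (use emeasure_compact_finite[OF assms(1)] in auto)
  also have "\<dots> \<le> 2 powr (3 - D / R * real d)"
    by (rule annulus_bound_le_powr[OF \<open>0 < D\<close> \<open>D < R\<close>])
  also have "\<dots> \<le> 2 powr (3 - \<delta> * real d / (\<delta> + diameter S))"
    \<comment> \<open>\<open>t \<mapsto> t / (t + diam S)\<close> is increasing\<close>
    using D \<open>D < R\<close> assms(4) by (auto simp: R_def field_simps intro!: mult_right_mono)
  finally have "real (sdim CARD('n) d) * christoffel (unif_meas S) d x
      \<le> real (sdim CARD('n) d) * 2 powr (3 - \<delta> * real d / (\<delta> + diameter S))"
    by (rule mult_left_mono) simp
  also have "\<dots> \<le> (real d ^ CARD('n) * (exp 1 / real CARD('n)) ^ CARD('n)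
      * exp (real CARD('n) ^ 2 / real d)) * 2 powr (3 - \<delta> * real d / (\<delta> + diameter S))"
    by (rule mult_right_mono[OF sdim_le]) (use assms(6) in \<open>simp_all add: Suc_le_eq\<close>)
  finally show ?thesis by (simp add: ac_simps)
qed

end
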